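(* Let $d,D\ge 1$ and $n=2t+l$ with $t,l\ge 1$ integers. Fix any diagonal $\Omega=\mathrm{diag}(\omega_1,\dots,\omega_D)$ with $(\omega_i)$ a probability vector. For $(U,V,W,\Lambda)\in X:=U(dD)\times U(D)\times U(D)\times[0,1]^D$ (identifying $\Lambda\in[0,1]^D$ with the diagonal matrix it defines) let $$\rho_l(U,V,W,\Lambda,\Omega)=\mathrm{tr}_{A,B_1,\dots,B_t,B_{t+l+1},\dots,B_n}\Big(V\Lambda V^\dagger\, U_{A,B_1}\cdots U_{A,B_n}\big(W\Omega W^\dagger\otimes(|0\rangle\langle 0|)^{\otimes n}\big)U_{A,B_n}^\dagger\cdots U_{A,B_1}^\dagger\Big),$$ and define $f(U,V,W,\Lambda)=(\mathrm{tr}\,\rho_l(U,V,W,\Lambda,\Omega))^2$ and $g(U,V,W,\Lambda)=\mathrm{tr}\,\rho_l^2(U,V,W,\Lambda,\Omega)$. Equip $X$ with the metric $$d_1\big((U,V,W,\Lambda),(U',V',W',\Lambda')\big)=\|U-U'\|_2+\|V-V'\|_2+\|W-W'\|_2+\|\Lambda-\Lambda'\|_\infty.$$ Then the Lipschitz constants of both $f$ and $g$ with respect to $d_1$ are at most $4n+10$.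
   Context: $H_A\cong\mathbb{C}^D$ and $H_{B_1},\dots,H_{B_n}\cong\mathbb{C}^d$; $U_{A,B_i}$ denotes $U$ acting on $H_A\otimes H_{B_i}$ and as the identity elsewhere; $V\Lambda V^\dagger$ acts on $H_A$; $|0\rangle$ is a fixed unit vector in $\mathbb{C}^d$. $\|\cdot\|_2$ is the Hilbert–Schmidt norm and $\|\cdot\|_\infty$ is the operator norm (for diagonal $\Lambda$, the maximum absolute entry). *)

theory Defs
  imports "HOL-Analysis.Analysis"
begin

text \<open>Finite-dimensional matrices are represented as functions nat => nat => complex,
  with the dimension kept explicit; only entries with indices below the dimension matter.\<close>

definition unitary_mat :: "nat \<Rightarrow> (nat \<Rightarrow> nat \<Rightarrow> complex) \<Rightarrow> bool" where
  "unitary_mat N U \<longleftrightarrow>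
     (\<forall>i<N. \<forall>j<N. (\<Sum>k<N. cnj (U k i) * U k j) = (if i = j then 1 else 0))"

definition hs_dist :: "nat \<Rightarrow> (nat \<Rightarrow> nat \<Rightarrow> complex) \<Rightarrow> (nat \<Rightarrow> nat \<Rightarrow> complex) \<Rightarrow> real" where
  "hs_dist N U U' = sqrt (\<Sum>i<N. \<Sum>j<N. (cmod (U i j - U' i j))\<^sup>2)"

definition diag_dist :: "nat \<Rightarrow> (nat \<Rightarrow> real) \<Rightarrow> (nat \<Rightarrow> real) \<Rightarrow> real" where
  "diag_dist D L L' = (MAX i\<in>{..<D}. \<bar>L i - L' i\<bar>)"

text \<open>Basis of C^d tensored n times: words of length n over {0..<d}.\<close>
definition words :: "nat \<Rightarrow> nat \<Rightarrow> nat list set" where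
  "words d n = {bs. length bs = n \<and> set bs \<subseteq> {..<d}}"

text \<open>Basis indices of H_A (x) H_B1 (x) ... (x) H_Bn.\<close>
definition idx :: "nat \<Rightarrow> nat \<Rightarrow> nat \<Rightarrow> (nat \<times> nat list) set" where
  "idx D d n = {..<D} \<times> words d n"

type_synonym op = "nat \<times> nat list \<Rightarrow> nat \<times> nat list \<Rightarrow> complex"

definition omul :: "(nat \<times> nat list) set \<Rightarrow> op \<Rightarrow> op \<Rightarrow> op" where
  "omul S M N = (\<lambda>i j. \<Sum>k\<in>S. M i k * N k j)"

definition oadj :: "op \<Rightarrow> op" where
  "oadj M = (\<lambda>i j. cnj (M j i))"

definition oid :: op where
  "oid = (\<lambda>i j. if i = j then 1 else 0)"

text \<open>U_{A,B_(k+1)}: the dD x dD matrix U acting on H_A (x) H_B_(k+1) (basis index a*d+b),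
  identity on the other factors (positions are 0-indexed here).\<close>
definition U_AB :: "nat \<Rightarrow> (nat \<Rightarrow> nat \<Rightarrow> complex) \<Rightarrow> nat \<Rightarrow> op" where
  "U_AB d U k = (\<lambda>(a, bs) (a', bs').
     if bs[k := 0] = bs'[k := 0] then U (a * d + bs ! k) (a' * d + bs' ! k) else 0)"

fun U_chain :: "nat \<Rightarrow> nat \<Rightarrow> nat \<Rightarrow> (nat \<Rightarrow> nat \<Rightarrow> complex) \<Rightarrow> nat \<Rightarrow> op" where
  "U_chain D d n U 0 = oid"
| "U_chain D d n U (Suc m) = omul (idx D d n) (U_chain D d n U m) (U_AB d U m)"

text \<open>W Omega W^dagger (x) (|z><z|)^(x)n, with Omega = diag(omega).\<close>
definition init_state :: "nat \<Rightarrow> nat \<Rightarrow> (nat \<Rightarrow> real) \<Rightarrow> (nat \<Rightarrow> complex)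
    \<Rightarrow> (nat \<Rightarrow> nat \<Rightarrow> complex) \<Rightarrow> op" where
  "init_state D n \<omega> z W = (\<lambda>(a, bs) (a', bs').
     (\<Sum>i<D. W a i * complex_of_real (\<omega> i) * cnj (W a' i)) *
     (\<Prod>k<n. z (bs ! k) * cnj (z (bs' ! k))))"

definition obs_A :: "nat \<Rightarrow> (nat \<Rightarrow> nat \<Rightarrow> complex) \<Rightarrow> (nat \<Rightarrow> real) \<Rightarrow> op" where
  "obs_A D V L = (\<lambda>(a, bs) (a', bs').
     if bs = bs' then (\<Sum>i<D. V a i * complex_of_real (L i) * cnj (V a' i)) else 0)"

definition full_op :: "nat \<Rightarrow> nat \<Rightarrow> nat \<Rightarrow> (nat \<Rightarrow> real) \<Rightarrow> (nat \<Rightarrow> complex)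
    \<Rightarrow> (nat \<Rightarrow> nat \<Rightarrow> complex) \<Rightarrow> (nat \<Rightarrow> nat \<Rightarrow> complex) \<Rightarrow> (nat \<Rightarrow> nat \<Rightarrow> complex)
    \<Rightarrow> (nat \<Rightarrow> real) \<Rightarrow> op" where
  "full_op d D n \<omega> z U V W L =
     (let S = idx D d n; P = U_chain D d n U n in
      omul S (obs_A D V L) (omul S P (omul S (init_state D n \<omega> z W) (oadj P))))"

text \<open>rho_l: partial trace over A, B_1..B_t, B_(t+l+1)..B_n (n = 2t+l), leaving B_(t+1)..B_(t+l);
  indexed by words of length l.\<close>
definition rho_l :: "nat \<Rightarrow> nat \<Rightarrow> nat \<Rightarrow> nat \<Rightarrow> (nat \<Rightarrow> real) \<Rightarrow> (nat \<Rightarrow> complex)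
    \<Rightarrow> (nat \<Rightarrow> nat \<Rightarrow> complex) \<Rightarrow> (nat \<Rightarrow> nat \<Rightarrow> complex) \<Rightarrow> (nat \<Rightarrow> nat \<Rightarrow> complex)
    \<Rightarrow> (nat \<Rightarrow> real) \<Rightarrow> nat list \<Rightarrow> nat list \<Rightarrow> complex" where
  "rho_l d D t l \<omega> z U V W L = (\<lambda>cs cs'.
     (let M = full_op d D (2 * t + l) \<omega> z U V W L in
      \<Sum>a<D. \<Sum>xs\<in>words d t. \<Sum>ys\<in>words d t. M (a, xs @ cs @ ys) (a, xs @ cs' @ ys)))"

definition tr_rho :: "nat \<Rightarrow> nat \<Rightarrow> (nat list \<Rightarrow> nat list \<Rightarrow> complex) \<Rightarrow> complex" where
  "tr_rho d l R = (\<Sum>cs\<in>words d l. R cs cs)"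

definition tr_rho_sq :: "nat \<Rightarrow> nat \<Rightarrow> (nat list \<Rightarrow> nat list \<Rightarrow> complex) \<Rightarrow> complex" where
  "tr_rho_sq d l R = (\<Sum>cs\<in>words d l. \<Sum>cs'\<in>words d l. R cs cs' * R cs' cs)"

definition in_X :: "nat \<Rightarrow> nat \<Rightarrow> (nat \<Rightarrow> nat \<Rightarrow> complex) \<Rightarrow> (nat \<Rightarrow> nat \<Rightarrow> complex)
    \<Rightarrow> (nat \<Rightarrow> nat \<Rightarrow> complex) \<Rightarrow> (nat \<Rightarrow> real) \<Rightarrow> bool" where
  "in_X d D U V W L \<longleftrightarrow> unitary_mat (d * D) U \<and> unitary_mat D V \<and> unitary_mat D W \<and>
     (\<forall>i<D. 0 \<le> L i \<and> L i \<le> 1)"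

definition d1 :: "nat \<Rightarrow> nat \<Rightarrow> (nat \<Rightarrow> nat \<Rightarrow> complex) \<times> (nat \<Rightarrow> nat \<Rightarrow> complex) \<times>
    (nat \<Rightarrow> nat \<Rightarrow> complex) \<times> (nat \<Rightarrow> real) \<Rightarrow> (nat \<Rightarrow> nat \<Rightarrow> complex) \<times> (nat \<Rightarrow> nat \<Rightarrow> complex) \<times>
    (nat \<Rightarrow> nat \<Rightarrow> complex) \<times> (nat \<Rightarrow> real) \<Rightarrow> real" where
  "d1 d D x y = (case (x, y) of ((U, V, W, L), (U', V', W', L')) \<Rightarrow>
     hs_dist (d * D) U U' + hs_dist D V V' + hs_dist D W W' + diag_dist D L L')"

end

theory Submission
  imports Defs
begin

text \<open>The initial state is the mixture \<open>\<Sum>\<^sub>i \<omega>\<^sub>i |\<chi>\<^sub>i\<rangle>\<langle>\<chi>\<^sub>i|\<close> with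
  \<open>\<chi>\<^sub>i = W e\<^sub>i \<otimes> z\<^sup>\<otimes>\<^sup>n\<close>, so the full operator is \<open>\<Sum>\<^sub>i \<omega>\<^sub>i |\<phi>\<^sub>i\<rangle>\<langle>\<psi>\<^sub>i|\<close> with
  \<open>\<psi>\<^sub>i = U\<^sub>A\<^sub>,\<^sub>B\<^sub>1 \<cdots> U\<^sub>A\<^sub>,\<^sub>B\<^sub>n \<chi>\<^sub>i\<close> and \<open>\<phi>\<^sub>i = V\<Lambda>V\<^sup>\<dagger> \<psi>\<^sub>i\<close>, and the partial trace
  turns it into \<open>\<rho>\<^sub>l = \<Sum>\<^sub>i \<omega>\<^sub>i A\<^sub>i B\<^sub>i\<^sup>\<dagger>\<close>, where \<open>A\<^sub>i\<close>, \<open>B\<^sub>i\<close> are \<open>\<phi>\<^sub>i\<close>, \<open>\<psi>\<^sub>i\<close> reshaped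
  into (kept factors) \<open>\<times>\<close> (traced factors) matrices. All factors of the circuit are contractions and
  operator norms are dominated by Hilbert--Schmidt norms, so telescoping gives
  \<open>\<parallel>\<psi>\<^sub>i\<parallel>, \<parallel>\<phi>\<^sub>i\<parallel> \<le> 1\<close>, \<open>\<parallel>\<psi>\<^sub>i - \<psi>\<^sub>i'\<parallel> \<le> n \<parallel>U - U'\<parallel>\<^sub>2 + \<parallel>W - W'\<parallel>\<^sub>2\<close> and
  \<open>\<parallel>\<phi>\<^sub>i - \<phi>\<^sub>i'\<parallel> \<le> \<parallel>\<psi>\<^sub>i - \<psi>\<^sub>i'\<parallel> + 2 \<parallel>V - V'\<parallel>\<^sub>2 + \<parallel>\<Lambda> - \<Lambda>'\<parallel>\<^sub>\<infinity>\<close>.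
  Cauchy--Schwarz then bounds \<open>|tr \<rho>\<^sub>l|\<close> and \<open>\<parallel>\<rho>\<^sub>l\<parallel>\<^sub>2\<close> by 1 and their variations by the sum
  \<open>E\<close> of these two differences, so \<open>(tr \<rho>\<^sub>l)\<^sup>2\<close> and \<open>tr \<rho>\<^sub>l\<^sup>2\<close> vary by at most
  \<open>2E \<le> (4n + 10) d\<^sub>1\<close>.\<close>

section \<open>Vector norms and operator bounds on finite index sets\<close>

definition l2_norm :: "'a set \<Rightarrow> ('a \<Rightarrow> complex) \<Rightarrow> real" where
  "l2_norm A x = L2_set (\<lambda>s. cmod (x s)) A"

lemma l2_norm_nonneg [simp]: "0 \<le> l2_norm A x"
  by (simp add: l2_norm_def)

lemma l2_norm_power2: "(l2_norm A x)\<^sup>2 = (\<Sum>s\<in>A. (cmod (x s))\<^sup>2)"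
  unfolding l2_norm_def L2_set_def by (simp add: sum_nonneg)

lemma l2_norm_le_if_power2_le:
  assumes "(l2_norm A x)\<^sup>2 \<le> (c * l2_norm B y)\<^sup>2" "0 \<le> c"
  shows "l2_norm A x \<le> c * l2_norm B y"
  using assms by (metis power2_le_imp_le mult_nonneg_nonneg l2_norm_nonneg)

lemma l2_norm_cong: "(\<And>s. s \<in> A \<Longrightarrow> x s = y s) \<Longrightarrow> l2_norm A x = l2_norm A y"
  unfolding l2_norm_def by (rule L2_set_cong) auto

lemma l2_norm_add_le: "l2_norm A (\<lambda>s. x s + y s) \<le> l2_norm A x + l2_norm A y"
proof -
  have "l2_norm A (\<lambda>s. x s + y s) \<le> L2_set (\<lambda>s. cmod (x s) + cmod (y s)) A"
    unfolding l2_norm_def by (rule L2_set_mono) (auto simp: norm_triangle_ineq)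
  also have "\<dots> \<le> l2_norm A x + l2_norm A y"
    unfolding l2_norm_def by (rule L2_set_triangle_ineq)
  finally show ?thesis .
qed

lemma l2_norm_scale: "l2_norm A (\<lambda>s. c * x s) = cmod c * l2_norm A x"
  unfolding l2_norm_def by (simp add: norm_mult L2_set_right_distrib)

lemma l2_norm_sum_le: "finite I \<Longrightarrow> l2_norm A (\<lambda>s. \<Sum>i\<in>I. f i s) \<le> (\<Sum>i\<in>I. l2_norm A (f i))"
proof (induction I rule: finite_induct)
  case empty
  then show ?case by (simp add: l2_norm_def L2_set_def)
next
  case (insert j I)
  have "l2_norm A (\<lambda>s. \<Sum>i\<in>insert j I. f i s) = l2_norm A (\<lambda>s. f j s + (\<Sum>i\<in>I. f i s))"
    using insert by simp
  also have "\<dots> \<le> l2_norm A (f j) + l2_norm A (\<lambda>s. \<Sum>i\<in>I. f i s)"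
    by (rule l2_norm_add_le)
  finally show ?case using insert by simp
qed

lemma cmod_sum_mult_le_l2_norm: "cmod (\<Sum>s\<in>A. x s * y s) \<le> l2_norm A x * l2_norm A y"
proof -
  have "cmod (\<Sum>s\<in>A. x s * y s) \<le> (\<Sum>s\<in>A. \<bar>cmod (x s)\<bar> * \<bar>cmod (y s)\<bar>)"
    by (rule order_trans[OF norm_sum]) (simp add: norm_mult)
  also have "\<dots> \<le> l2_norm A x * l2_norm A y"
    unfolding l2_norm_def by (rule L2_set_mult_ineq)
  finally show ?thesis .
qed

lemma cmod_sum_mult_cnj_le_l2_norm: "cmod (\<Sum>s\<in>A. x s * cnj (y s)) \<le> l2_norm A x * l2_norm A y"
  using cmod_sum_mult_le_l2_norm[where y="\<lambda>s. cnj (y s)"] by (simp add: l2_norm_def)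

lemma l2_norm_reindex_le:
  assumes "inj_on f A" "f ` A \<subseteq> B" "finite B"
  shows "l2_norm A (\<lambda>a. x (f a)) \<le> l2_norm B x"
proof -
  have "(\<Sum>a\<in>A. (cmod (x (f a)))\<^sup>2) = (\<Sum>b\<in>f ` A. (cmod (x b))\<^sup>2)"
    using sum.reindex[OF assms(1), of "\<lambda>b. (cmod (x b))\<^sup>2"] by simp
  also have "\<dots> \<le> (\<Sum>b\<in>B. (cmod (x b))\<^sup>2)"
    by (rule sum_mono2[OF assms(3) assms(2)]) auto
  finally show ?thesis unfolding l2_norm_def L2_set_def by simp
qed

definition mat_vec :: "'a set \<Rightarrow> ('b \<Rightarrow> 'a \<Rightarrow> complex) \<Rightarrow> ('a \<Rightarrow> complex) \<Rightarrow> 'b \<Rightarrow> complex" where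
  "mat_vec A M x = (\<lambda>p. \<Sum>s\<in>A. M p s * x s)"

definition mat_mul :: "'a set \<Rightarrow> ('b \<Rightarrow> 'a \<Rightarrow> complex) \<Rightarrow> ('a \<Rightarrow> 'c \<Rightarrow> complex) \<Rightarrow> 'b \<Rightarrow> 'c \<Rightarrow> complex"
  where "mat_mul A M N = (\<lambda>i j. \<Sum>k\<in>A. M i k * N k j)"

definition mat_adj :: "('a \<Rightarrow> 'b \<Rightarrow> complex) \<Rightarrow> 'b \<Rightarrow> 'a \<Rightarrow> complex" where
  "mat_adj M = (\<lambda>i j. cnj (M j i))"

definition op_bounded :: "'a set \<Rightarrow> ('a \<Rightarrow> 'a \<Rightarrow> complex) \<Rightarrow> real \<Rightarrow> bool" where
  "op_bounded A M c \<longleftrightarrow> (\<forall>x. l2_norm A (mat_vec A M x) \<le> c * l2_norm A x)"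

lemma omul_eq_mat_mul: "omul S = mat_mul S"
  unfolding omul_def mat_mul_def by (intro ext) simp

lemma mat_vec_diff_left: "mat_vec A (M - N) x = mat_vec A M x - mat_vec A N x"
  unfolding mat_vec_def by (auto simp: algebra_simps sum_subtractf)

lemma mat_vec_diff_right: "mat_vec A M (x - y) = mat_vec A M x - mat_vec A M y"
  unfolding mat_vec_def by (auto simp: algebra_simps sum_subtractf)

lemma mat_vec_mat_mul: "mat_vec A (mat_mul A M N) x = mat_vec A M (mat_vec A N x)"
proof
  fix p
  have "mat_vec A (mat_mul A M N) x p = (\<Sum>s\<in>A. \<Sum>k\<in>A. M p k * (N k s * x s))"
    unfolding mat_vec_def mat_mul_def by (simp add: sum_distrib_right mult.assoc)
  also have "\<dots> = (\<Sum>k\<in>A. \<Sum>s\<in>A. M p k * (N k s * x s))"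
    by (rule sum.swap)
  also have "\<dots> = mat_vec A M (mat_vec A N x) p"
    unfolding mat_vec_def by (simp add: sum_distrib_left)
  finally show "mat_vec A (mat_mul A M N) x p = mat_vec A M (mat_vec A N x) p" .
qed

lemma op_boundedD: "op_bounded A M c \<Longrightarrow> l2_norm A (mat_vec A M x) \<le> c * l2_norm A x"
  by (simp add: op_bounded_def)

lemma op_bounded_oid:
  assumes "finite S"
  shows "op_bounded S oid 1"
proof -
  have "mat_vec S oid x p = x p" if "p \<in> S" for x p
    using assms that by (simp add: mat_vec_def oid_def mult_delta_left)
  then show ?thesis
    unfolding op_bounded_def by (metis l2_norm_cong mult_1 order_refl)
qed

lemma op_bounded_diff_self: "op_bounded A (M - M) 0"
  unfolding op_bounded_def mat_vec_def l2_norm_def L2_set_def by simp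

lemma op_bounded_mat_mul:
  assumes "op_bounded A M a" "op_bounded A N b" "0 \<le> a"
  shows "op_bounded A (mat_mul A M N) (a * b)"
  unfolding op_bounded_def mat_vec_mat_mul
proof
  fix x
  have "l2_norm A (mat_vec A M (mat_vec A N x)) \<le> a * l2_norm A (mat_vec A N x)"
    using op_boundedD[OF assms(1)] .
  also have "\<dots> \<le> a * (b * l2_norm A x)"
    using op_boundedD[OF assms(2)] assms(3) by (simp add: mult_left_mono)
  finally show "l2_norm A (mat_vec A M (mat_vec A N x)) \<le> a * b * l2_norm A x"
    by simp
qed

lemma l2_norm_mat_vec_diff_le:
  assumes "op_bounded A (M - M') a" "op_bounded A M' 1"
  shows "l2_norm A (mat_vec A M x - mat_vec A M' x') \<le> a * l2_norm A x + l2_norm A (x - x')"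
proof -
  have "mat_vec A M x - mat_vec A M' x' = (\<lambda>p. mat_vec A (M - M') x p + mat_vec A M' (x - x') p)"
    by (simp add: mat_vec_diff_left mat_vec_diff_right fun_eq_iff)
  then have "l2_norm A (mat_vec A M x - mat_vec A M' x')
      \<le> l2_norm A (mat_vec A (M - M') x) + l2_norm A (mat_vec A M' (x - x'))"
    by (simp add: l2_norm_add_le)
  also have "\<dots> \<le> a * l2_norm A x + 1 * l2_norm A (x - x')"
    by (intro add_mono op_boundedD assms)
  finally show ?thesis by simp
qed

lemma op_bounded_mat_mul_diff:
  assumes "op_bounded A (M - M') a" "op_bounded A M' 1"
    and "op_bounded A (N - N') b" "op_bounded A N 1" "0 \<le> a"
  shows "op_bounded A (mat_mul A M N - mat_mul A M' N') (a + b)"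
  unfolding op_bounded_def
proof
  fix x
  have "l2_norm A (mat_vec A (mat_mul A M N - mat_mul A M' N') x)
      = l2_norm A (mat_vec A M (mat_vec A N x) - mat_vec A M' (mat_vec A N' x))"
    by (simp add: mat_vec_diff_left mat_vec_mat_mul)
  also have "\<dots> \<le> a * l2_norm A (mat_vec A N x) + l2_norm A (mat_vec A (N - N') x)"
    using l2_norm_mat_vec_diff_le[OF assms(1,2)] by (simp add: mat_vec_diff_left)
  also have "\<dots> \<le> a * (1 * l2_norm A x) + b * l2_norm A x"
    by (intro add_mono mult_left_mono op_boundedD assms)
  finally show "l2_norm A (mat_vec A (mat_mul A M N - mat_mul A M' N') x) \<le> (a + b) * l2_norm A x"
    by (simp add: algebra_simps)
qed

lemma op_bounded_hs_norm: "op_bounded {..<N} K (sqrt (\<Sum>i<N. \<Sum>j<N. (cmod (K i j))\<^sup>2))"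
  unfolding op_bounded_def
proof
  fix x
  let ?c = "sqrt (\<Sum>i<N. \<Sum>j<N. (cmod (K i j))\<^sup>2)"
  have "(l2_norm {..<N} (mat_vec {..<N} K x))\<^sup>2 = (\<Sum>i<N. (cmod (\<Sum>j<N. K i j * x j))\<^sup>2)"
    by (simp add: l2_norm_power2 mat_vec_def)
  also have "\<dots> \<le> (\<Sum>i<N. (l2_norm {..<N} (K i) * l2_norm {..<N} x)\<^sup>2)"
    by (intro sum_mono power_mono cmod_sum_mult_le_l2_norm) auto
  also have "\<dots> = (?c * l2_norm {..<N} x)\<^sup>2"
    by (simp add: power_mult_distrib l2_norm_power2 sum_distrib_right sum_nonneg)
  finally show "l2_norm {..<N} (mat_vec {..<N} K x) \<le> ?c * l2_norm {..<N} x"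
    by (rule l2_norm_le_if_power2_le) (simp add: sum_nonneg)
qed

lemma hs_dist_nonneg: "0 \<le> hs_dist N U U'"
  unfolding hs_dist_def by (simp add: sum_nonneg)

lemma op_bounded_diff_hs_dist: "op_bounded {..<N} (U - U') (hs_dist N U U')"
  using op_bounded_hs_norm[of N "U - U'"] unfolding hs_dist_def by simp

lemma op_bounded_mat_adj_diff_hs_dist: "op_bounded {..<N} (mat_adj U - mat_adj U') (hs_dist N U U')"
proof -
  have "(\<Sum>i<N. \<Sum>j<N. (cmod ((mat_adj U - mat_adj U') i j))\<^sup>2)
      = (\<Sum>i<N. \<Sum>j<N. (cmod (U i j - U' i j))\<^sup>2)"
    unfolding mat_adj_def by (subst sum.swap) (simp flip: complex_cnj_diff)
  then show ?thesis
    using op_bounded_hs_norm[of N "mat_adj U - mat_adj U'"] unfolding hs_dist_def by simp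
qed

lemma cmod_power2_sum_mat_vec_unitary:
  assumes "unitary_mat N U"
  shows "(\<Sum>i<N. (cmod (\<Sum>j<N. U i j * x j))\<^sup>2) = (\<Sum>j<N. (cmod (x j))\<^sup>2)"
proof -
  have orth: "(\<Sum>i<N. cnj (U i k) * U i j) = (if k = j then 1 else 0)" if "j < N" "k < N" for j k
    using assms that unfolding unitary_mat_def by blast
  have "complex_of_real (\<Sum>i<N. (cmod (\<Sum>j<N. U i j * x j))\<^sup>2)
      = (\<Sum>i<N. (\<Sum>j<N. U i j * x j) * (\<Sum>k<N. cnj (U i k) * cnj (x k)))"
    by (simp only: of_real_sum complex_norm_square cnj_sum complex_cnj_mult)
  also have "\<dots> = (\<Sum>i<N. \<Sum>j<N. \<Sum>k<N. x j * cnj (x k) * (cnj (U i k) * U i j))"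
    by (simp only: sum_product) (intro sum.cong refl; simp add: ac_simps)
  also have "\<dots> = (\<Sum>j<N. \<Sum>k<N. \<Sum>i<N. x j * cnj (x k) * (cnj (U i k) * U i j))"
    by (subst sum.swap, rule sum.cong[OF refl], rule sum.swap)
  also have "\<dots> = (\<Sum>j<N. \<Sum>k<N. x j * cnj (x k) * (\<Sum>i<N. cnj (U i k) * U i j))"
    by (simp only: sum_distrib_left)
  also have "\<dots> = (\<Sum>j<N. \<Sum>k<N. if k = j then x j * cnj (x k) else 0)"
    by (intro sum.cong refl) (simp add: orth)
  also have "\<dots> = (\<Sum>j<N. x j * cnj (x j))"
    by (intro sum.cong refl) simp
  also have "\<dots> = complex_of_real (\<Sum>j<N. (cmod (x j))\<^sup>2)"
    by (simp only: of_real_sum complex_norm_square)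
  finally show ?thesis
    using of_real_eq_iff by blast
qed

lemma op_bounded_unitary: "unitary_mat N U \<Longrightarrow> op_bounded {..<N} U 1"
  unfolding op_bounded_def
  by (intro allI l2_norm_le_if_power2_le)
     (simp_all add: l2_norm_power2 mat_vec_def cmod_power2_sum_mat_vec_unitary)

text \<open>Unitarity is only assumed as \<open>U\<^sup>\<dagger> U = 1\<close>; the bound for \<open>U\<^sup>\<dagger>\<close> comes from
  \<open>\<parallel>U\<^sup>\<dagger>y\<parallel>\<^sup>2 = \<langle>y, U U\<^sup>\<dagger>y\<rangle> \<le> \<parallel>y\<parallel> \<parallel>U\<^sup>\<dagger>y\<parallel>\<close>.\<close>
lemma op_bounded_mat_adj_unitary:
  assumes "unitary_mat N U"
  shows "op_bounded {..<N} (mat_adj U) 1"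
  unfolding op_bounded_def
proof
  fix y
  let ?w = "mat_vec {..<N} (mat_adj U) y"
  have "complex_of_real ((l2_norm {..<N} ?w)\<^sup>2) = (\<Sum>j<N. ?w j * cnj (?w j))"
    by (simp only: l2_norm_power2 of_real_sum complex_norm_square)
  also have "\<dots> = (\<Sum>j<N. \<Sum>a<N. cnj (U a j) * y a * cnj (?w j))"
    by (simp add: mat_vec_def mat_adj_def sum_distrib_right)
  also have "\<dots> = (\<Sum>a<N. \<Sum>j<N. cnj (U a j) * y a * cnj (?w j))"
    by (rule sum.swap)
  also have "\<dots> = (\<Sum>a<N. y a * (\<Sum>j<N. cnj (U a j * ?w j)))"
    by (rule sum.cong[OF refl]) (simp add: sum_distrib_left mult_ac)
  also have "\<dots> = (\<Sum>a<N. y a * cnj (mat_vec {..<N} U ?w a))"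
    by (simp only: mat_vec_def cnj_sum)
  finally have "complex_of_real ((l2_norm {..<N} ?w)\<^sup>2) = \<dots>" .
  then have "(l2_norm {..<N} ?w)\<^sup>2 \<le> l2_norm {..<N} y * l2_norm {..<N} (mat_vec {..<N} U ?w)"
    using cmod_sum_mult_cnj_le_l2_norm[where A="{..<N}" and x=y] by (metis abs_power2 norm_of_real)
  also have "\<dots> \<le> l2_norm {..<N} y * l2_norm {..<N} ?w"
    using op_boundedD[OF op_bounded_unitary[OF assms], of ?w] by (simp add: mult_left_mono)
  finally have "l2_norm {..<N} ?w * l2_norm {..<N} ?w \<le> l2_norm {..<N} y * l2_norm {..<N} ?w"
    by (simp add: power2_eq_square)
  then show "l2_norm {..<N} ?w \<le> 1 * l2_norm {..<N} y"
    using l2_norm_nonneg[of "{..<N}" ?w] by (cases "l2_norm {..<N} ?w = 0") auto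
qed

definition diag_mat :: "(nat \<Rightarrow> real) \<Rightarrow> nat \<Rightarrow> nat \<Rightarrow> complex" where
  "diag_mat L = (\<lambda>i j. if i = j then complex_of_real (L i) else 0)"

lemma op_bounded_diag_mat:
  assumes "\<And>i. i < N \<Longrightarrow> \<bar>L i\<bar> \<le> c" "0 \<le> c"
  shows "op_bounded {..<N} (diag_mat L) c"
  unfolding op_bounded_def
proof
  fix x
  have "l2_norm {..<N} (mat_vec {..<N} (diag_mat L) x) = L2_set (\<lambda>i. \<bar>L i\<bar> * cmod (x i)) {..<N}"
    unfolding l2_norm_def mat_vec_def diag_mat_def
    by (rule L2_set_cong) (simp_all add: norm_mult mult_delta_left)
  also have "\<dots> \<le> L2_set (\<lambda>i. c * cmod (x i)) {..<N}"
    using assms(1) by (intro L2_set_mono mult_right_mono) auto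
  also have "\<dots> = c * l2_norm {..<N} x"
    unfolding l2_norm_def using assms(2) by (simp add: L2_set_right_distrib)
  finally show "l2_norm {..<N} (mat_vec {..<N} (diag_mat L) x) \<le> c * l2_norm {..<N} x" .
qed

lemma diag_dist_ge: "i < D \<Longrightarrow> \<bar>L i - L' i\<bar> \<le> diag_dist D L L'"
  unfolding diag_dist_def by (rule Max_ge) auto

lemma diag_dist_nonneg: "1 \<le> D \<Longrightarrow> 0 \<le> diag_dist D L L'"
  using diag_dist_ge[of 0 D L L'] by linarith

lemma op_bounded_diag_mat_diff:
  assumes "1 \<le> D"
  shows "op_bounded {..<D} (diag_mat L - diag_mat L') (diag_dist D L L')"
proof -
  have "diag_mat L - diag_mat L' = diag_mat (\<lambda>i. L i - L' i)"
    unfolding diag_mat_def by (intro ext) simp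
  then show ?thesis
    using op_bounded_diag_mat[OF diag_dist_ge diag_dist_nonneg[OF assms]] by simp
qed

text \<open>Via the bijection \<open>e\<close>, \<open>M\<close> is block diagonal with all blocks equal to \<open>K\<close>.\<close>
lemma op_bounded_block_diagonal:
  assumes bij: "bij_betw e (R \<times> {..<N}) S" and "finite R"
    and M: "\<And>r j r' j'. r \<in> R \<Longrightarrow> j < N \<Longrightarrow> r' \<in> R \<Longrightarrow> j' < N \<Longrightarrow>
              M (e (r, j)) (e (r', j')) = (if r = r' then K j j' else 0)"
    and K: "op_bounded {..<N} K c" and "0 \<le> c"
  shows "op_bounded S M c"
  unfolding op_bounded_def
proof
  fix x :: "_ \<Rightarrow> complex"
  have sum_S: "(\<Sum>s\<in>S. g s) = (\<Sum>r\<in>R. \<Sum>j<N. g (e (r, j)))" for g :: "_ \<Rightarrow> 'z::comm_monoid_add"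
    using sum.reindex_bij_betw[OF bij, of g] by (simp add: sum.cartesian_product case_prod_beta')
  define y where "y r = (\<lambda>j. x (e (r, j)))" for r
  have block: "mat_vec S M x (e (r, j)) = mat_vec {..<N} K (y r) j" if "r \<in> R" "j < N" for r j
  proof -
    have "mat_vec S M x (e (r, j)) = (\<Sum>r'\<in>R. if r = r' then (\<Sum>j'<N. K j j' * y r' j') else 0)"
      unfolding mat_vec_def sum_S using that M by (intro sum.cong refl) (auto simp: y_def)
    then show ?thesis using that \<open>finite R\<close> by (simp add: mat_vec_def)
  qed
  have "(l2_norm S (mat_vec S M x))\<^sup>2 = (\<Sum>r\<in>R. (l2_norm {..<N} (mat_vec {..<N} K (y r)))\<^sup>2)"
    unfolding l2_norm_power2 sum_S using block by (intro sum.cong refl) auto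
  also have "\<dots> \<le> (\<Sum>r\<in>R. (c * l2_norm {..<N} (y r))\<^sup>2)"
    using op_boundedD[OF K] by (intro sum_mono power_mono) auto
  also have "\<dots> = (c * l2_norm S x)\<^sup>2"
    by (simp add: power_mult_distrib l2_norm_power2 y_def sum_distrib_left sum_S)
  finally show "l2_norm S (mat_vec S M x) \<le> c * l2_norm S x"
    by (rule l2_norm_le_if_power2_le[OF _ \<open>0 \<le> c\<close>])
qed

section \<open>The circuit on \<open>H\<^sub>A \<otimes> H\<^sub>B\<^sup>\<otimes>\<^sup>n\<close>\<close>

lemma finite_words: "finite (words d n)"
proof -
  have "words d n = {xs. set xs \<subseteq> {..<d} \<and> length xs = n}"
    unfolding words_def by auto
  then show ?thesis
    using finite_lists_length_eq[of "{..<d}" n] by simp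
qed

lemma finite_idx: "finite (idx D d n)"
  unfolding idx_def using finite_words by simp

lemma words_update: "bs \<in> words d n \<Longrightarrow> b < d \<Longrightarrow> bs[k := b] \<in> words d n"
  using set_update_subsetI[of bs "{..<d}" b k] unfolding words_def by auto

lemma words_nth: "bs \<in> words d n \<Longrightarrow> k < n \<Longrightarrow> bs ! k < d"
  unfolding words_def using nth_mem by fastforce

definition act_on_A :: "(nat \<Rightarrow> nat \<Rightarrow> complex) \<Rightarrow> op" where
  "act_on_A K = (\<lambda>(a, bs) (a', bs'). if bs = bs' then K a a' else 0)"

lemma act_on_A_diff: "act_on_A K - act_on_A K' = act_on_A (K - K')"
  unfolding act_on_A_def by (auto simp: fun_eq_iff)

lemma op_bounded_act_on_A:
  assumes "op_bounded {..<D} K c" "0 \<le> c"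
  shows "op_bounded (idx D d n) (act_on_A K) c"
proof (rule op_bounded_block_diagonal[OF _ finite_words _ assms])
  show "bij_betw (\<lambda>(bs, a). (a, bs)) (words d n \<times> {..<D}) (idx D d n)"
    unfolding idx_def by (rule bij_betw_byWitness[where f'="\<lambda>(a, bs). (bs, a)"]) auto
qed (simp add: act_on_A_def)

text \<open>The basis vector \<open>(a, bs)\<close> of \<open>H\<^sub>A \<otimes> H\<^sub>B\<^sup>\<otimes>\<^sup>n\<close> is matched with the block index
  \<open>bs[k := 0]\<close> (the untouched factors) and the index \<open>a * d + bs ! k\<close> of \<open>H\<^sub>A \<otimes> H\<^sub>B\<^sub>k\<close>.\<close>
lemma bij_betw_split_factor:
  assumes "k < n" "1 \<le> d"
  shows "bij_betw (\<lambda>(r, j). (j div d, r[k := j mod d]))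
           ({r \<in> words d n. r ! k = 0} \<times> {..<d * D}) (idx D d n)"
proof (rule bij_betw_byWitness[where f'="\<lambda>(a, bs). (bs[k := 0], a * d + bs ! k)"], safe)
  fix r j assume r: "r \<in> words d n" "r ! k = 0" and j: "j < d * D"
  have "length r = n" using r unfolding words_def by simp
  then show "r[k := j mod d, k := 0] = r" "j div d * d + r[k := j mod d] ! k = j"
    using r(2) list_update_id[of r k] assms by simp_all
  show "(j div d, r[k := j mod d]) \<in> idx D d n"
    using j assms words_update[OF r(1)] unfolding idx_def
    by (simp add: less_mult_imp_div_less mult.commute)
next
  fix a bs assume q: "(a, bs) \<in> idx D d n"
  then have bs: "bs \<in> words d n" and a: "a < D" unfolding idx_def by auto
  have b: "bs ! k < d" using words_nth[OF bs assms(1)] .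
  then show "(a * d + bs ! k) div d = a" "bs[k := 0, k := (a * d + bs ! k) mod d] = bs"
    by simp_all
  show "bs[k := 0] \<in> words d n" "bs[k := 0] ! k = 0"
    using words_update[OF bs, of 0 k] assms bs unfolding words_def by auto
  have "a * d + bs ! k < (a + 1) * d" using b by simp
  also have "\<dots> \<le> d * D" using a mult_le_mono1[of "a + 1" D d] by (simp add: mult.commute)
  finally show "a * d + bs ! k < d * D" .
qed

lemma U_AB_diff: "U_AB d U k - U_AB d U' k = U_AB d (U - U') k"
  unfolding U_AB_def by (auto simp: fun_eq_iff)

lemma U_AB_split_factor:
  assumes "k < n" "r \<in> words d n" "r ! k = 0" "r' \<in> words d n" "r' ! k = 0"
  shows "U_AB d U k (j div d, r[k := j mod d]) (j' div d, r'[k := j' mod d])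
       = (if r = r' then U j j' else 0)"
proof -
  have "r[k := 0] = r" "r'[k := 0] = r'" "length r = n" "length r' = n"
    using assms(3,5) list_update_id[of r k] list_update_id[of r' k] assms(2,4)
    unfolding words_def by simp_all
  then show ?thesis
    unfolding U_AB_def using assms(1) by simp
qed

lemma op_bounded_U_AB:
  assumes "k < n" "1 \<le> d" "op_bounded {..<d * D} U c" "0 \<le> c"
  shows "op_bounded (idx D d n) (U_AB d U k) c"
  by (rule op_bounded_block_diagonal[OF bij_betw_split_factor[OF assms(1,2)] _ _ assms(3,4)])
     (auto simp: finite_words U_AB_split_factor[OF assms(1)])

lemma obs_A_eq_act_on_A:
  "obs_A D V L = act_on_A (mat_mul {..<D} V (mat_mul {..<D} (diag_mat L) (mat_adj V)))"
  unfolding obs_A_def act_on_A_def mat_mul_def diag_mat_def mat_adj_def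
  by (intro ext) (auto simp: mult_delta_left mult.assoc intro!: sum.cong)

lemma op_bounded_obs_A:
  assumes "unitary_mat D V" "\<And>i. i < D \<Longrightarrow> 0 \<le> L i \<and> L i \<le> 1"
  shows "op_bounded (idx D d n) (obs_A D V L) 1"
proof -
  have "op_bounded {..<D} (diag_mat L) 1"
    using assms(2) by (intro op_bounded_diag_mat) auto
  then have "op_bounded {..<D} (mat_mul {..<D} (diag_mat L) (mat_adj V)) (1 * 1)"
    by (intro op_bounded_mat_mul op_bounded_mat_adj_unitary assms) simp_all
  then have "op_bounded {..<D} (mat_mul {..<D} V (mat_mul {..<D} (diag_mat L) (mat_adj V))) (1 * (1 * 1))"
    by (intro op_bounded_mat_mul[OF op_bounded_unitary[OF assms(1)]]) simp_all
  then show ?thesis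
    unfolding obs_A_eq_act_on_A by (intro op_bounded_act_on_A) simp_all
qed

lemma op_bounded_obs_A_diff:
  assumes "1 \<le> D" "unitary_mat D V" "unitary_mat D V'"
    and "\<And>i. i < D \<Longrightarrow> 0 \<le> L i \<and> L i \<le> 1" "\<And>i. i < D \<Longrightarrow> 0 \<le> L' i \<and> L' i \<le> 1"
  shows "op_bounded (idx D d n) (obs_A D V L - obs_A D V' L')
           (2 * hs_dist D V V' + diag_dist D L L')"
proof -
  let ?S = "{..<D}"
  have diag: "op_bounded ?S (diag_mat L) 1" "op_bounded ?S (diag_mat L') 1"
    using assms(4,5) by (auto intro!: op_bounded_diag_mat)
  have "op_bounded ?S (mat_mul ?S (diag_mat L) (mat_adj V) - mat_mul ?S (diag_mat L') (mat_adj V'))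
          (diag_dist D L L' + hs_dist D V V')"
    by (rule op_bounded_mat_mul_diff[OF op_bounded_diag_mat_diff diag(2)
          op_bounded_mat_adj_diff_hs_dist op_bounded_mat_adj_unitary diag_dist_nonneg])
       (use assms in simp_all)
  moreover have "op_bounded ?S (mat_mul ?S (diag_mat L) (mat_adj V)) (1 * 1)"
    by (rule op_bounded_mat_mul[OF diag(1) op_bounded_mat_adj_unitary]) (simp_all add: assms)
  ultimately have "op_bounded ?S (mat_mul ?S V (mat_mul ?S (diag_mat L) (mat_adj V))
        - mat_mul ?S V' (mat_mul ?S (diag_mat L') (mat_adj V')))
          (hs_dist D V V' + (diag_dist D L L' + hs_dist D V V'))"
    by (intro op_bounded_mat_mul_diff[OF op_bounded_diff_hs_dist op_bounded_unitary[OF assms(3)]]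
        hs_dist_nonneg) simp_all
  then show ?thesis
    unfolding obs_A_eq_act_on_A act_on_A_diff
    using hs_dist_nonneg[of D V V'] diag_dist_nonneg[OF assms(1), of L L']
    by (intro op_bounded_act_on_A) (simp_all add: algebra_simps)
qed

lemma op_bounded_U_chain:
  assumes "1 \<le> d" "unitary_mat (d * D) U" "m \<le> n"
  shows "op_bounded (idx D d n) (U_chain D d n U m) 1"
  using assms(3)
proof (induction m)
  case 0
  show ?case by (simp add: op_bounded_oid finite_idx)
next
  case (Suc m)
  have "op_bounded (idx D d n) (U_AB d U m) 1"
    using Suc.prems assms(1) by (intro op_bounded_U_AB op_bounded_unitary[OF assms(2)]) simp_all
  then show ?case
    using op_bounded_mat_mul[OF Suc.IH] Suc.prems by (simp add: omul_eq_mat_mul)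
qed

lemma op_bounded_U_chain_diff:
  assumes "1 \<le> d" "unitary_mat (d * D) U" "unitary_mat (d * D) U'" "m \<le> n"
  shows "op_bounded (idx D d n) (U_chain D d n U m - U_chain D d n U' m)
           (real m * hs_dist (d * D) U U')"
  using assms(4)
proof (induction m)
  case 0
  show ?case
    using op_bounded_diff_self[of "idx D d n" oid] by (simp only: U_chain.simps of_nat_0 mult_zero_left)
next
  case (Suc m)
  have "op_bounded (idx D d n) (U_AB d U m - U_AB d U' m) (hs_dist (d * D) U U')"
    unfolding U_AB_diff using Suc.prems
    by (intro op_bounded_U_AB op_bounded_diff_hs_dist hs_dist_nonneg) (use assms(1) in simp_all)
  moreover have "op_bounded (idx D d n) (U_AB d U m) 1"
    using Suc.prems assms(1) by (intro op_bounded_U_AB op_bounded_unitary[OF assms(2)]) simp_all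
  moreover have "op_bounded (idx D d n) (U_chain D d n U' m) 1"
    using Suc.prems by (intro op_bounded_U_chain assms) simp_all
  ultimately have "op_bounded (idx D d n) (U_chain D d n U (Suc m) - U_chain D d n U' (Suc m))
      (real m * hs_dist (d * D) U U' + hs_dist (d * D) U U')"
    unfolding U_chain.simps omul_eq_mat_mul
    by (intro op_bounded_mat_mul_diff mult_nonneg_nonneg hs_dist_nonneg
        Suc.IH[OF Suc_leD[OF Suc.prems]]) simp_all
  then show ?case by (simp only: of_nat_Suc ring_distribs mult_1 add.commute)
qed

section \<open>Decomposition into pure states\<close>

lemma words_Suc: "words d (Suc n) = (\<lambda>(b, bs). b # bs) ` ({..<d} \<times> words d n)"
  unfolding words_def by (auto simp: length_Suc_conv image_iff)

lemma sum_words_prod: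
  fixes f :: "nat \<Rightarrow> real"
  shows "(\<Sum>bs\<in>words d n. \<Prod>k<n. f (bs ! k)) = (\<Sum>b<d. f b) ^ n"
proof (induction n)
  case 0
  have "words d 0 = {[]}" unfolding words_def by auto
  then show ?case by simp
next
  case (Suc n)
  have inj: "inj_on (\<lambda>(b, bs). b # bs) ({..<d} \<times> words d n)"
    by (auto simp: inj_on_def)
  have "(\<Sum>bs\<in>words d (Suc n). \<Prod>k<Suc n. f (bs ! k))
      = (\<Sum>b<d. \<Sum>bs\<in>words d n. f b * (\<Prod>k<n. f (bs ! k)))"
    unfolding words_Suc sum.reindex[OF inj] sum.cartesian_product'
    by (simp del: prod.lessThan_Suc add: prod.lessThan_Suc_shift)
  also have "\<dots> = (\<Sum>b<d. f b) ^ Suc n"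
    using Suc.IH by (simp add: sum_distrib_left[symmetric] sum_distrib_right[symmetric])
  finally show ?case .
qed

lemma l2_norm_tensor_power_power2:
  assumes "(\<Sum>k<d. (cmod (z k))\<^sup>2) = 1"
  shows "(l2_norm (idx D d n) (\<lambda>(a, bs). g a * (\<Prod>k<n. z (bs ! k))))\<^sup>2 = (\<Sum>a<D. (cmod (g a))\<^sup>2)"
proof -
  have "(l2_norm (idx D d n) (\<lambda>(a, bs). g a * (\<Prod>k<n. z (bs ! k))))\<^sup>2
     = (\<Sum>a<D. (cmod (g a))\<^sup>2 * (\<Sum>bs\<in>words d n. \<Prod>k<n. (cmod (z (bs ! k)))\<^sup>2))"
    unfolding l2_norm_power2 idx_def sum.cartesian_product'
    by (simp add: norm_mult power_mult_distrib prod_norm[symmetric] prod_power_distrib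
        sum_distrib_left)
  then show ?thesis
    by (simp add: sum_words_prod[of "\<lambda>b. (cmod (z b))\<^sup>2"] assms)
qed

lemma unitary_mat_column_norm:
  assumes "unitary_mat D W" "i < D"
  shows "(\<Sum>a<D. (cmod (W a i))\<^sup>2) = 1"
proof -
  have "(\<Sum>a<D. cnj (W a i) * W a i) = 1"
    using assms unfolding unitary_mat_def by auto
  then have "complex_of_real (\<Sum>a<D. (cmod (W a i))\<^sup>2) = 1"
    by (simp only: of_real_sum complex_norm_square mult.commute[of "W _ i"])
  then show ?thesis by (metis of_real_eq_1_iff)
qed

text \<open>\<open>product_state\<close>, \<open>evolved_state\<close> and \<open>observed_state\<close> are the vectors \<open>\<chi>\<^sub>i\<close>,
  \<open>\<psi>\<^sub>i\<close> and \<open>\<phi>\<^sub>i\<close> of the proof sketch above.\<close>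

definition product_state :: "nat \<Rightarrow> (nat \<Rightarrow> complex) \<Rightarrow> (nat \<Rightarrow> nat \<Rightarrow> complex) \<Rightarrow> nat
    \<Rightarrow> nat \<times> nat list \<Rightarrow> complex" where
  "product_state n z W i = (\<lambda>(a, bs). W a i * (\<Prod>k<n. z (bs ! k)))"

lemma l2_norm_product_state:
  assumes "(\<Sum>k<d. (cmod (z k))\<^sup>2) = 1" "unitary_mat D W" "i < D"
  shows "l2_norm (idx D d n) (product_state n z W i) = 1"
proof -
  have "(l2_norm (idx D d n) (product_state n z W i))\<^sup>2 = 1"
    unfolding product_state_def l2_norm_tensor_power_power2[OF assms(1)]
    using unitary_mat_column_norm[OF assms(2,3)] .
  then show ?thesis
    using l2_norm_nonneg by (metis abs_of_nonneg power2_eq_1_iff abs_1 real_sqrt_abs real_sqrt_one)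
qed

lemma l2_norm_product_state_diff:
  assumes "(\<Sum>k<d. (cmod (z k))\<^sup>2) = 1" "i < D"
  shows "l2_norm (idx D d n) (product_state n z W i - product_state n z W' i) \<le> hs_dist D W W'"
proof -
  have "product_state n z W i - product_state n z W' i
      = (\<lambda>(a, bs). (W a i - W' a i) * (\<Prod>k<n. z (bs ! k)))"
    unfolding product_state_def by (auto simp: algebra_simps)
  then have "(l2_norm (idx D d n) (product_state n z W i - product_state n z W' i))\<^sup>2
      = (\<Sum>a<D. (cmod (W a i - W' a i))\<^sup>2)"
    by (simp only: l2_norm_tensor_power_power2[OF assms(1)])
  also have "\<dots> \<le> (\<Sum>a<D. \<Sum>j<D. (cmod (W a j - W' a j))\<^sup>2)"
    using assms(2) by (intro sum_mono member_le_sum) auto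
  also have "\<dots> = (hs_dist D W W')\<^sup>2"
    unfolding hs_dist_def by (simp add: sum_nonneg)
  finally show ?thesis
    by (rule power2_le_imp_le[OF _ hs_dist_nonneg])
qed

definition evolved_state :: "nat \<Rightarrow> nat \<Rightarrow> nat \<Rightarrow> (nat \<Rightarrow> complex) \<Rightarrow> (nat \<Rightarrow> nat \<Rightarrow> complex)
    \<Rightarrow> (nat \<Rightarrow> nat \<Rightarrow> complex) \<Rightarrow> nat \<Rightarrow> nat \<times> nat list \<Rightarrow> complex" where
  "evolved_state d D n z U W i = mat_vec (idx D d n) (U_chain D d n U n) (product_state n z W i)"

definition observed_state :: "nat \<Rightarrow> nat \<Rightarrow> nat \<Rightarrow> (nat \<Rightarrow> complex) \<Rightarrow> (nat \<Rightarrow> nat \<Rightarrow> complex)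
    \<Rightarrow> (nat \<Rightarrow> nat \<Rightarrow> complex) \<Rightarrow> (nat \<Rightarrow> nat \<Rightarrow> complex) \<Rightarrow> (nat \<Rightarrow> real) \<Rightarrow> nat
    \<Rightarrow> nat \<times> nat list \<Rightarrow> complex" where
  "observed_state d D n z U V W L i = mat_vec (idx D d n) (obs_A D V L) (evolved_state d D n z U W i)"

lemma l2_norm_evolved_state:
  assumes "1 \<le> d" "(\<Sum>k<d. (cmod (z k))\<^sup>2) = 1" "unitary_mat (d * D) U" "unitary_mat D W" "i < D"
  shows "l2_norm (idx D d n) (evolved_state d D n z U W i) \<le> 1"
proof -
  have "l2_norm (idx D d n) (evolved_state d D n z U W i)
      \<le> 1 * l2_norm (idx D d n) (product_state n z W i)"
    unfolding evolved_state_def by (rule op_boundedD[OF op_bounded_U_chain[OF assms(1,3) order_refl]])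
  then show ?thesis
    using l2_norm_product_state[OF assms(2,4,5), of n] by simp
qed

lemma l2_norm_evolved_state_diff:
  assumes "1 \<le> d" "(\<Sum>k<d. (cmod (z k))\<^sup>2) = 1" "unitary_mat (d * D) U" "unitary_mat (d * D) U'"
    and "unitary_mat D W" "i < D"
  shows "l2_norm (idx D d n) (evolved_state d D n z U W i - evolved_state d D n z U' W' i)
           \<le> real n * hs_dist (d * D) U U' + hs_dist D W W'"
proof -
  have "l2_norm (idx D d n) (evolved_state d D n z U W i - evolved_state d D n z U' W' i)
      \<le> real n * hs_dist (d * D) U U' * l2_norm (idx D d n) (product_state n z W i)
        + l2_norm (idx D d n) (product_state n z W i - product_state n z W' i)"
    unfolding evolved_state_def
    by (rule l2_norm_mat_vec_diff_le[OF op_bounded_U_chain_diff[OF assms(1,3,4) order_refl]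
          op_bounded_U_chain[OF assms(1,4) order_refl]])
  then show ?thesis
    using l2_norm_product_state[OF assms(2,5,6), of n] l2_norm_product_state_diff[OF assms(2,6), of n W W']
    by simp
qed

lemma l2_norm_observed_state:
  assumes "1 \<le> d" "(\<Sum>k<d. (cmod (z k))\<^sup>2) = 1" "unitary_mat (d * D) U" "unitary_mat D W" "i < D"
    and "unitary_mat D V" "\<And>i. i < D \<Longrightarrow> 0 \<le> L i \<and> L i \<le> 1"
  shows "l2_norm (idx D d n) (observed_state d D n z U V W L i) \<le> 1"
proof -
  have "l2_norm (idx D d n) (observed_state d D n z U V W L i)
      \<le> 1 * l2_norm (idx D d n) (evolved_state d D n z U W i)"
    unfolding observed_state_def by (rule op_boundedD[OF op_bounded_obs_A[OF assms(6,7)]])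
  then show ?thesis
    using l2_norm_evolved_state[OF assms(1-5), of n] by simp
qed

lemma l2_norm_observed_state_diff:
  assumes "1 \<le> d" "1 \<le> D" "(\<Sum>k<d. (cmod (z k))\<^sup>2) = 1"
    and "unitary_mat (d * D) U" "unitary_mat (d * D) U'" "unitary_mat D V" "unitary_mat D V'"
    and "unitary_mat D W" "unitary_mat D W'" "i < D"
    and "\<And>i. i < D \<Longrightarrow> 0 \<le> L i \<and> L i \<le> 1" "\<And>i. i < D \<Longrightarrow> 0 \<le> L' i \<and> L' i \<le> 1"
  shows "l2_norm (idx D d n) (observed_state d D n z U V W L i - observed_state d D n z U' V' W' L' i)
           \<le> 2 * hs_dist D V V' + diag_dist D L L' + (real n * hs_dist (d * D) U U' + hs_dist D W W')"
proof -
  have "l2_norm (idx D d n) (observed_state d D n z U V W L i - observed_state d D n z U' V' W' L' i)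
      \<le> (2 * hs_dist D V V' + diag_dist D L L') * l2_norm (idx D d n) (evolved_state d D n z U W i)
        + l2_norm (idx D d n) (evolved_state d D n z U W i - evolved_state d D n z U' W' i)"
    unfolding observed_state_def
    by (rule l2_norm_mat_vec_diff_le[OF op_bounded_obs_A_diff[OF assms(2,6,7,11,12)]
          op_bounded_obs_A[OF assms(7,12)]])
  also have "\<dots> \<le> (2 * hs_dist D V V' + diag_dist D L L') * 1
        + (real n * hs_dist (d * D) U U' + hs_dist D W W')"
    using hs_dist_nonneg[of D V V'] diag_dist_nonneg[OF assms(2), of L L']
    by (intro add_mono mult_left_mono l2_norm_evolved_state l2_norm_evolved_state_diff assms) simp_all
  finally show ?thesis by simp
qed

lemma mat_mul_sum_outer:
  "mat_mul S M (\<lambda>s q. \<Sum>i\<in>I. c i * x i s * y i q)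
     = (\<lambda>p q. \<Sum>i\<in>I. c i * mat_vec S M (x i) p * y i q)"
proof (intro ext)
  fix p q
  have "mat_mul S M (\<lambda>s q. \<Sum>i\<in>I. c i * x i s * y i q) p q
      = (\<Sum>i\<in>I. \<Sum>s\<in>S. M p s * (c i * x i s * y i q))"
    unfolding mat_mul_def by (simp add: sum_distrib_left sum.swap[of _ S])
  also have "\<dots> = (\<Sum>i\<in>I. c i * mat_vec S M (x i) p * y i q)"
    unfolding mat_vec_def by (intro sum.cong refl) (simp add: sum_distrib_left sum_distrib_right mult_ac)
  finally show "mat_mul S M (\<lambda>s q. \<Sum>i\<in>I. c i * x i s * y i q) p q
      = (\<Sum>i\<in>I. c i * mat_vec S M (x i) p * y i q)" .
qed

lemma mat_mul_sum_outer_mat_adj: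
  "mat_mul S (\<lambda>s s'. \<Sum>i\<in>I. c i * x i s * cnj (x i s')) (mat_adj P)
     = (\<lambda>s q. \<Sum>i\<in>I. c i * x i s * cnj (mat_vec S P (x i) q))"
proof (intro ext)
  fix s q
  have "mat_mul S (\<lambda>s s'. \<Sum>i\<in>I. c i * x i s * cnj (x i s')) (mat_adj P) s q
      = (\<Sum>i\<in>I. \<Sum>s'\<in>S. c i * x i s * cnj (x i s') * cnj (P q s'))"
    unfolding mat_mul_def mat_adj_def by (simp add: sum_distrib_right sum.swap[of _ S])
  also have "\<dots> = (\<Sum>i\<in>I. c i * x i s * cnj (mat_vec S P (x i) q))"
    unfolding mat_vec_def by (intro sum.cong refl) (simp add: sum_distrib_left mult_ac)
  finally show "mat_mul S (\<lambda>s s'. \<Sum>i\<in>I. c i * x i s * cnj (x i s')) (mat_adj P) s q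
      = (\<Sum>i\<in>I. c i * x i s * cnj (mat_vec S P (x i) q))" .
qed

lemma init_state_eq_sum_outer:
  "init_state D n \<omega> z W
     = (\<lambda>p q. \<Sum>i<D. complex_of_real (\<omega> i) * product_state n z W i p * cnj (product_state n z W i q))"
  unfolding init_state_def product_state_def
  by (intro ext) (auto simp: sum_distrib_left sum_distrib_right prod.distrib cnj_prod mult_ac intro!: sum.cong)

lemma full_op_eq_sum_outer:
  "full_op d D n \<omega> z U V W L = (\<lambda>p q. \<Sum>i<D. complex_of_real (\<omega> i) *
     observed_state d D n z U V W L i p * cnj (evolved_state d D n z U W i q))"
proof -
  have "oadj = mat_adj"
    unfolding oadj_def mat_adj_def by (intro ext) simp
  then show ?thesis
    unfolding full_op_def Let_def init_state_eq_sum_outer omul_eq_mat_mul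
    by (simp add: mat_mul_sum_outer mat_mul_sum_outer_mat_adj observed_state_def evolved_state_def)
qed

section \<open>Hilbert--Schmidt estimates for mixtures\<close>

definition hs_norm :: "'c set \<Rightarrow> 'r set \<Rightarrow> ('c \<Rightarrow> 'r \<Rightarrow> complex) \<Rightarrow> real" where
  "hs_norm C R A = l2_norm (C \<times> R) (\<lambda>(c, r). A c r)"

lemma hs_norm_nonneg [simp]: "0 \<le> hs_norm C R A"
  by (simp add: hs_norm_def)

lemma hs_norm_power2: "(hs_norm C R A)\<^sup>2 = (\<Sum>c\<in>C. (l2_norm R (A c))\<^sup>2)"
  unfolding hs_norm_def l2_norm_power2 sum.cartesian_product' by simp

lemma hs_norm_mat_mul_mat_adj_le:
  "hs_norm C C (mat_mul R A (mat_adj B)) \<le> hs_norm C R A * hs_norm C R B"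
proof -
  have "(hs_norm C C (mat_mul R A (mat_adj B)))\<^sup>2
      = (\<Sum>c\<in>C. \<Sum>c'\<in>C. (cmod (\<Sum>r\<in>R. A c r * cnj (B c' r)))\<^sup>2)"
    unfolding hs_norm_power2 l2_norm_power2 mat_mul_def mat_adj_def ..
  also have "\<dots> \<le> (\<Sum>c\<in>C. \<Sum>c'\<in>C. (l2_norm R (A c))\<^sup>2 * (l2_norm R (B c'))\<^sup>2)"
    by (intro sum_mono) (simp add: power_mult_distrib[symmetric] power_mono cmod_sum_mult_cnj_le_l2_norm)
  also have "\<dots> = (hs_norm C R A * hs_norm C R B)\<^sup>2"
    by (simp add: power_mult_distrib hs_norm_power2 sum_product)
  finally show ?thesis
    by (rule power2_le_imp_le) simp
qed

lemma cmod_trace_mat_mul_mat_adj_le: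
  "cmod (\<Sum>c\<in>C. mat_mul R A (mat_adj B) c c) \<le> hs_norm C R A * hs_norm C R B"
proof -
  have "(\<Sum>c\<in>C. mat_mul R A (mat_adj B) c c)
      = (\<Sum>q\<in>C \<times> R. (\<lambda>(c, r). A c r) q * cnj ((\<lambda>(c, r). B c r) q))"
    unfolding mat_mul_def mat_adj_def sum.cartesian_product' by simp
  then show ?thesis
    unfolding hs_norm_def by (simp only: cmod_sum_mult_cnj_le_l2_norm)
qed

lemma mat_mul_mat_adj_diff:
  "mat_mul R A (mat_adj B) - mat_mul R A' (mat_adj B')
     = (\<lambda>c c'. mat_mul R (A - A') (mat_adj B) c c' + mat_mul R A' (mat_adj (B - B')) c c')"
  unfolding mat_mul_def mat_adj_def
  by (intro ext) (simp add: ring_distribs sum.distrib sum_subtractf)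

lemma hs_norm_mat_mul_mat_adj_diff_le:
  assumes "hs_norm C R B \<le> 1" "hs_norm C R A' \<le> 1"
  shows "hs_norm C C (mat_mul R A (mat_adj B) - mat_mul R A' (mat_adj B'))
           \<le> hs_norm C R (A - A') + hs_norm C R (B - B')"
proof -
  have "hs_norm C C (mat_mul R A (mat_adj B) - mat_mul R A' (mat_adj B'))
      \<le> hs_norm C C (mat_mul R (A - A') (mat_adj B)) + hs_norm C C (mat_mul R A' (mat_adj (B - B')))"
    unfolding mat_mul_mat_adj_diff hs_norm_def by (simp add: case_prod_beta' l2_norm_add_le)
  also have "\<dots> \<le> hs_norm C R (A - A') * hs_norm C R B + hs_norm C R A' * hs_norm C R (B - B')"
    by (intro add_mono hs_norm_mat_mul_mat_adj_le)
  also have "\<dots> \<le> hs_norm C R (A - A') * 1 + 1 * hs_norm C R (B - B')"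
    by (intro add_mono mult_left_mono mult_right_mono assms hs_norm_nonneg)
  finally show ?thesis by simp
qed

lemma cmod_trace_mat_mul_mat_adj_diff_le:
  assumes "hs_norm C R B \<le> 1" "hs_norm C R A' \<le> 1"
  shows "cmod ((\<Sum>c\<in>C. mat_mul R A (mat_adj B) c c) - (\<Sum>c\<in>C. mat_mul R A' (mat_adj B') c c))
           \<le> hs_norm C R (A - A') + hs_norm C R (B - B')"
proof -
  have "(\<Sum>c\<in>C. mat_mul R A (mat_adj B) c c) - (\<Sum>c\<in>C. mat_mul R A' (mat_adj B') c c)
      = (\<Sum>c\<in>C. (mat_mul R A (mat_adj B) - mat_mul R A' (mat_adj B')) c c)"
    by (simp add: sum_subtractf)
  also have "\<dots> = (\<Sum>c\<in>C. mat_mul R (A - A') (mat_adj B) c c) + (\<Sum>c\<in>C. mat_mul R A' (mat_adj (B - B')) c c)"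
    unfolding mat_mul_mat_adj_diff by (simp add: sum.distrib)
  finally have eq: "(\<Sum>c\<in>C. mat_mul R A (mat_adj B) c c) - (\<Sum>c\<in>C. mat_mul R A' (mat_adj B') c c) = \<dots>" .
  have "cmod (\<dots>) \<le> hs_norm C R (A - A') * hs_norm C R B + hs_norm C R A' * hs_norm C R (B - B')"
    by (rule order_trans[OF norm_triangle_ineq add_mono[OF cmod_trace_mat_mul_mat_adj_le
          cmod_trace_mat_mul_mat_adj_le]])
  also have "\<dots> \<le> hs_norm C R (A - A') * 1 + 1 * hs_norm C R (B - B')"
    by (intro add_mono mult_left_mono mult_right_mono assms hs_norm_nonneg)
  finally show ?thesis unfolding eq by simp
qed

text \<open>\<open>tr \<rho>\<^sup>2 - tr \<rho>'\<^sup>2 = \<langle>\<rho> - \<rho>', \<rho>\<^sup>T\<rangle> + \<langle>\<rho>', (\<rho> - \<rho>')\<^sup>T\<rangle>\<close>, and transposition preserves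
  the Hilbert--Schmidt norm.\<close>
lemma cmod_trace_square_diff_le:
  "cmod ((\<Sum>c\<in>C. \<Sum>c'\<in>C. \<rho> c c' * \<rho> c' c) - (\<Sum>c\<in>C. \<Sum>c'\<in>C. \<rho>' c c' * \<rho>' c' c))
     \<le> hs_norm C C (\<rho> - \<rho>') * (hs_norm C C \<rho> + hs_norm C C \<rho>')"
proof -
  have transpose: "l2_norm (C \<times> C) (\<lambda>(c, c'). M c' c) = hs_norm C C M" for M :: "'a \<Rightarrow> 'a \<Rightarrow> complex"
    unfolding hs_norm_def l2_norm_def L2_set_def sum.cartesian_product' by (subst sum.swap) simp
  have "(\<Sum>c\<in>C. \<Sum>c'\<in>C. \<rho> c c' * \<rho> c' c) - (\<Sum>c\<in>C. \<Sum>c'\<in>C. \<rho>' c c' * \<rho>' c' c)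
      = (\<Sum>q\<in>C \<times> C. (\<lambda>(c, c'). (\<rho> - \<rho>') c c') q * (\<lambda>(c, c'). \<rho> c' c) q)
        + (\<Sum>q\<in>C \<times> C. (\<lambda>(c, c'). \<rho>' c c') q * (\<lambda>(c, c'). (\<rho> - \<rho>') c' c) q)"
    unfolding sum.cartesian_product' sum_subtractf[symmetric] sum.distrib[symmetric]
    by (intro sum.cong refl) (simp add: algebra_simps)
  also have "cmod \<dots> \<le> l2_norm (C \<times> C) (\<lambda>(c, c'). (\<rho> - \<rho>') c c') * l2_norm (C \<times> C) (\<lambda>(c, c'). \<rho> c' c)
      + l2_norm (C \<times> C) (\<lambda>(c, c'). \<rho>' c c') * l2_norm (C \<times> C) (\<lambda>(c, c'). (\<rho> - \<rho>') c' c)"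
    by (rule order_trans[OF norm_triangle_ineq add_mono[OF cmod_sum_mult_le_l2_norm cmod_sum_mult_le_l2_norm]])
  also have "\<dots> = hs_norm C C (\<rho> - \<rho>') * (hs_norm C C \<rho> + hs_norm C C \<rho>')"
    unfolding transpose[of \<rho>] transpose[of "\<rho> - \<rho>'"] unfolding hs_norm_def[symmetric]
    by (simp add: algebra_simps)
  finally show ?thesis .
qed

definition mixture :: "'r set \<Rightarrow> (nat \<Rightarrow> real) \<Rightarrow> nat \<Rightarrow> (nat \<Rightarrow> 'c \<Rightarrow> 'r \<Rightarrow> complex)
    \<Rightarrow> (nat \<Rightarrow> 'c \<Rightarrow> 'r \<Rightarrow> complex) \<Rightarrow> 'c \<Rightarrow> 'c \<Rightarrow> complex" where
  "mixture R \<omega> D A B = (\<lambda>c c'. \<Sum>i<D. complex_of_real (\<omega> i) * mat_mul R (A i) (mat_adj (B i)) c c')"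

lemma cmod_convex_combination_le:
  fixes D :: nat
  assumes "\<forall>i<D. 0 \<le> \<omega> i" "(\<Sum>i<D. \<omega> i) = 1" "\<And>i. i < D \<Longrightarrow> cmod (X i) \<le> b"
  shows "cmod (\<Sum>i<D. complex_of_real (\<omega> i) * X i) \<le> b"
proof -
  have "cmod (\<Sum>i<D. complex_of_real (\<omega> i) * X i) \<le> (\<Sum>i<D. \<omega> i * cmod (X i))"
    by (rule order_trans[OF norm_sum]) (use assms(1) in \<open>simp add: norm_mult\<close>)
  also have "\<dots> \<le> (\<Sum>i<D. \<omega> i * b)"
    using assms(1,3) by (intro sum_mono mult_left_mono) auto
  also have "\<dots> = b"
    using assms(2) by (simp add: sum_distrib_right[symmetric])
  finally show ?thesis .
qed

lemma hs_norm_convex_combination_le: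
  fixes D :: nat
  assumes "\<forall>i<D. 0 \<le> \<omega> i" "(\<Sum>i<D. \<omega> i) = 1" "\<And>i. i < D \<Longrightarrow> hs_norm C R (F i) \<le> b"
  shows "hs_norm C R (\<lambda>c r. \<Sum>i<D. complex_of_real (\<omega> i) * F i c r) \<le> b"
proof -
  have "hs_norm C R (\<lambda>c r. \<Sum>i<D. complex_of_real (\<omega> i) * F i c r)
      \<le> (\<Sum>i<D. l2_norm (C \<times> R) (\<lambda>q. complex_of_real (\<omega> i) * (\<lambda>(c, r). F i c r) q))"
    unfolding hs_norm_def case_prod_beta' by (rule l2_norm_sum_le) simp
  also have "\<dots> = (\<Sum>i<D. \<omega> i * hs_norm C R (F i))"
    unfolding l2_norm_scale hs_norm_def using assms(1) by (intro sum.cong refl) auto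
  also have "\<dots> \<le> (\<Sum>i<D. \<omega> i * b)"
    using assms(1,3) by (intro sum_mono mult_left_mono) auto
  also have "\<dots> = b"
    using assms(2) by (simp add: sum_distrib_right[symmetric])
  finally show ?thesis .
qed

lemma cmod_power2_diff_le:
  fixes a b :: complex
  assumes "cmod a \<le> 1" "cmod b \<le> 1" "cmod (a - b) \<le> e"
  shows "cmod (a\<^sup>2 - b\<^sup>2) \<le> 2 * e"
proof -
  have "cmod (a\<^sup>2 - b\<^sup>2) = cmod (a + b) * cmod (a - b)"
    by (simp add: power2_eq_square algebra_simps flip: norm_mult)
  also have "\<dots> \<le> 2 * e"
    using norm_triangle_ineq[of a b] assms by (intro mult_mono) auto
  finally show ?thesis .
qed

context
  fixes \<omega> :: "nat \<Rightarrow> real" and D :: nat and C :: "'c set" and R :: "'r set"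
    and A B A' B' :: "nat \<Rightarrow> 'c \<Rightarrow> 'r \<Rightarrow> complex" and E :: real
  assumes weights: "\<forall>i<D. 0 \<le> \<omega> i" "(\<Sum>i<D. \<omega> i) = 1"
    and norms: "\<And>i. i < D \<Longrightarrow> hs_norm C R (A i) \<le> 1" "\<And>i. i < D \<Longrightarrow> hs_norm C R (B i) \<le> 1"
      "\<And>i. i < D \<Longrightarrow> hs_norm C R (A' i) \<le> 1" "\<And>i. i < D \<Longrightarrow> hs_norm C R (B' i) \<le> 1"
    and diffs: "\<And>i. i < D \<Longrightarrow> hs_norm C R (A i - A' i) + hs_norm C R (B i - B' i) \<le> E"
begin

lemma cmod_power2_trace_mixture_diff_le:
  "cmod ((\<Sum>c\<in>C. mixture R \<omega> D A B c c)\<^sup>2 - (\<Sum>c\<in>C. mixture R \<omega> D A' B' c c)\<^sup>2) \<le> 2 * E"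
proof -
  have trace: "(\<Sum>c\<in>C. mixture R \<omega> D A B c c)
      = (\<Sum>i<D. complex_of_real (\<omega> i) * (\<Sum>c\<in>C. mat_mul R (A i) (mat_adj (B i)) c c))"
    for A B :: "nat \<Rightarrow> 'c \<Rightarrow> 'r \<Rightarrow> complex"
    unfolding mixture_def by (subst sum.swap) (simp add: sum_distrib_left)
  have "cmod (\<Sum>c\<in>C. mixture R \<omega> D A B c c) \<le> 1" "cmod (\<Sum>c\<in>C. mixture R \<omega> D A' B' c c) \<le> 1"
    unfolding trace using norms
    by (auto intro!: cmod_convex_combination_le[OF weights] order_trans[OF cmod_trace_mat_mul_mat_adj_le]
        mult_le_one)
  moreover have "cmod ((\<Sum>c\<in>C. mixture R \<omega> D A B c c) - (\<Sum>c\<in>C. mixture R \<omega> D A' B' c c)) \<le> E"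
  proof -
    have "(\<Sum>c\<in>C. mixture R \<omega> D A B c c) - (\<Sum>c\<in>C. mixture R \<omega> D A' B' c c)
        = (\<Sum>i<D. complex_of_real (\<omega> i) * ((\<Sum>c\<in>C. mat_mul R (A i) (mat_adj (B i)) c c)
            - (\<Sum>c\<in>C. mat_mul R (A' i) (mat_adj (B' i)) c c)))"
      unfolding trace by (simp add: right_diff_distrib sum_subtractf)
    then show ?thesis
      using norms diffs
      by (simp only:) (intro cmod_convex_combination_le[OF weights] order_trans[OF cmod_trace_mat_mul_mat_adj_diff_le])
  qed
  ultimately show ?thesis
    by (rule cmod_power2_diff_le)
qed

lemma cmod_trace_square_mixture_diff_le:
  "cmod ((\<Sum>c\<in>C. \<Sum>c'\<in>C. mixture R \<omega> D A B c c' * mixture R \<omega> D A B c' c)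
       - (\<Sum>c\<in>C. \<Sum>c'\<in>C. mixture R \<omega> D A' B' c c' * mixture R \<omega> D A' B' c' c)) \<le> 2 * E"
proof -
  have "hs_norm C C (mixture R \<omega> D A B) \<le> 1" "hs_norm C C (mixture R \<omega> D A' B') \<le> 1"
    unfolding mixture_def using norms
    by (auto intro!: hs_norm_convex_combination_le[OF weights] order_trans[OF hs_norm_mat_mul_mat_adj_le]
        mult_le_one)
  moreover have "hs_norm C C (mixture R \<omega> D A B - mixture R \<omega> D A' B') \<le> E"
  proof -
    have "mixture R \<omega> D A B - mixture R \<omega> D A' B' = (\<lambda>c c'. \<Sum>i<D. complex_of_real (\<omega> i) *
        (mat_mul R (A i) (mat_adj (B i)) - mat_mul R (A' i) (mat_adj (B' i))) c c')"
      unfolding mixture_def by (simp add: fun_eq_iff right_diff_distrib sum_subtractf)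
    then show ?thesis
      using norms diffs
      by (simp only:) (intro hs_norm_convex_combination_le[OF weights]
          order_trans[OF hs_norm_mat_mul_mat_adj_diff_le])
  qed
  ultimately have "hs_norm C C (mixture R \<omega> D A B - mixture R \<omega> D A' B')
      * (hs_norm C C (mixture R \<omega> D A B) + hs_norm C C (mixture R \<omega> D A' B')) \<le> E * (1 + 1)"
    by (intro mult_mono add_mono) (auto intro: order_trans[OF hs_norm_nonneg])
  then show ?thesis
    using cmod_trace_square_diff_le[where C=C and \<rho>="mixture R \<omega> D A B" and \<rho>'="mixture R \<omega> D A' B'"]
    by simp
qed

end

section \<open>The reduced state\<close>

text \<open>\<open>reshape F\<close> is \<open>F\<close> read as a matrix with rows indexed by the kept factors
  \<open>B\<^sub>t\<^sub>+\<^sub>1, \<dots>, B\<^sub>t\<^sub>+\<^sub>l\<close> and columns by \<open>A\<close> and the traced factors.\<close>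

definition reshape :: "(nat \<times> nat list \<Rightarrow> complex) \<Rightarrow> nat list \<Rightarrow> nat \<times> nat list \<times> nat list \<Rightarrow> complex"
  where "reshape F = (\<lambda>cs (a, xs, ys). F (a, xs @ cs @ ys))"

lemma reshape_diff: "reshape (F - G) = reshape F - reshape G"
  unfolding reshape_def by (auto simp: fun_eq_iff)

lemma hs_norm_reshape_le:
  "hs_norm (words d l) ({..<D} \<times> words d t \<times> words d t) (reshape F) \<le> l2_norm (idx D d (2 * t + l)) F"
proof -
  let ?e = "\<lambda>(cs, a, xs, ys). (a, xs @ cs @ ys)"
  have "inj_on ?e (words d l \<times> {..<D} \<times> words d t \<times> words d t)"
  proof (rule inj_onI)
    fix p q
    assume p: "p \<in> words d l \<times> {..<D} \<times> words d t \<times> words d t"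
      and q: "q \<in> words d l \<times> {..<D} \<times> words d t \<times> words d t" and "?e p = ?e q"
    obtain cs a xs ys cs' a' xs' ys' where pq: "p = (cs, a, xs, ys)" "q = (cs', a', xs', ys')"
      by (cases p, cases q) auto
    have "length xs = length xs'" "length cs = length cs'"
      using p q unfolding pq words_def by auto
    then show "p = q"
      using \<open>?e p = ?e q\<close> unfolding pq by simp
  qed
  moreover have "?e ` (words d l \<times> {..<D} \<times> words d t \<times> words d t) \<subseteq> idx D d (2 * t + l)"
    unfolding idx_def words_def by auto
  ultimately have "l2_norm (words d l \<times> {..<D} \<times> words d t \<times> words d t) (\<lambda>q. F (?e q))
      \<le> l2_norm (idx D d (2 * t + l)) F"
    by (rule l2_norm_reindex_le[OF _ _ finite_idx])
  moreover have "(\<lambda>(cs, r). reshape F cs r) = (\<lambda>q. F (?e q))"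
    by (auto simp: reshape_def fun_eq_iff)
  ultimately show ?thesis
    unfolding hs_norm_def by simp
qed

lemma rho_l_eq_mixture:
  "rho_l d D t l \<omega> z U V W L = mixture ({..<D} \<times> words d t \<times> words d t) \<omega> D
     (\<lambda>i. reshape (observed_state d D (2 * t + l) z U V W L i))
     (\<lambda>i. reshape (evolved_state d D (2 * t + l) z U W i))"
proof (intro ext)
  fix cs cs'
  let ?\<phi> = "observed_state d D (2 * t + l) z U V W L" and ?\<psi> = "evolved_state d D (2 * t + l) z U W"
  have "mixture ({..<D} \<times> words d t \<times> words d t) \<omega> D (\<lambda>i. reshape (?\<phi> i)) (\<lambda>i. reshape (?\<psi> i)) cs cs'
      = (\<Sum>i<D. \<Sum>a<D. \<Sum>xs\<in>words d t. \<Sum>ys\<in>words d t. complex_of_real (\<omega> i) *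
           ?\<phi> i (a, xs @ cs @ ys) * cnj (?\<psi> i (a, xs @ cs' @ ys)))"
    unfolding mixture_def mat_mul_def mat_adj_def reshape_def sum.cartesian_product'
    by (simp add: sum_distrib_left mult.assoc)
  also have "\<dots> = (\<Sum>a<D. \<Sum>xs\<in>words d t. \<Sum>ys\<in>words d t. \<Sum>i<D. complex_of_real (\<omega> i) *
           ?\<phi> i (a, xs @ cs @ ys) * cnj (?\<psi> i (a, xs @ cs' @ ys)))"
    by (subst sum.swap, rule sum.cong[OF refl], subst sum.swap, rule sum.cong[OF refl], rule sum.swap)
  also have "\<dots> = rho_l d D t l \<omega> z U V W L cs cs'"
    unfolding rho_l_def Let_def full_op_eq_sum_outer ..
  finally show "rho_l d D t l \<omega> z U V W L cs cs'
      = mixture ({..<D} \<times> words d t \<times> words d t) \<omega> D (\<lambda>i. reshape (?\<phi> i)) (\<lambda>i. reshape (?\<psi> i)) cs cs'"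
    by (rule sym)
qed

lemma hs_norm_reshape_states_le:
  assumes "1 \<le> d" "(\<Sum>k<d. (cmod (z k))\<^sup>2) = 1" "in_X d D U V W L" "i < D"
  shows "hs_norm (words d l) ({..<D} \<times> words d t \<times> words d t)
           (reshape (observed_state d D (2 * t + l) z U V W L i)) \<le> 1"
    and "hs_norm (words d l) ({..<D} \<times> words d t \<times> words d t)
           (reshape (evolved_state d D (2 * t + l) z U W i)) \<le> 1"
  using assms unfolding in_X_def
  by (auto intro!: order_trans[OF hs_norm_reshape_le] l2_norm_observed_state l2_norm_evolved_state)

lemma hs_norm_reshape_states_diff_le:
  assumes "1 \<le> d" "1 \<le> D" "(\<Sum>k<d. (cmod (z k))\<^sup>2) = 1"
    and "in_X d D U V W L" "in_X d D U' V' W' L'" "i < D"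
  shows "hs_norm (words d l) ({..<D} \<times> words d t \<times> words d t)
           (reshape (observed_state d D (2 * t + l) z U V W L i)
            - reshape (observed_state d D (2 * t + l) z U' V' W' L' i))
       + hs_norm (words d l) ({..<D} \<times> words d t \<times> words d t)
           (reshape (evolved_state d D (2 * t + l) z U W i)
            - reshape (evolved_state d D (2 * t + l) z U' W' i))
       \<le> 2 * hs_dist D V V' + diag_dist D L L' + 2 * (real (2 * t + l) * hs_dist (d * D) U U' + hs_dist D W W')"
proof -
  note X = assms(4,5)[unfolded in_X_def]
  define e where "e = real (2 * t + l) * hs_dist (d * D) U U' + hs_dist D W W'"
  have "hs_norm (words d l) ({..<D} \<times> words d t \<times> words d t)
           (reshape (observed_state d D (2 * t + l) z U V W L i - observed_state d D (2 * t + l) z U' V' W' L' i))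
      \<le> 2 * hs_dist D V V' + diag_dist D L L' + e"
    unfolding e_def using X assms(1-3,6)
    by (intro order_trans[OF hs_norm_reshape_le] l2_norm_observed_state_diff) auto
  moreover have "hs_norm (words d l) ({..<D} \<times> words d t \<times> words d t)
           (reshape (evolved_state d D (2 * t + l) z U W i - evolved_state d D (2 * t + l) z U' W' i))
      \<le> e"
    unfolding e_def using X assms(1,3,6)
    by (intro order_trans[OF hs_norm_reshape_le] l2_norm_evolved_state_diff) auto
  ultimately show ?thesis
    unfolding reshape_diff e_def[symmetric] by linarith
qed

theorem theorem7:
  fixes d D t l :: nat and \<omega> :: "nat \<Rightarrow> real" and z :: "nat \<Rightarrow> complex"
    and U V W U' V' W' :: "nat \<Rightarrow> nat \<Rightarrow> complex" and L L' :: "nat \<Rightarrow> real"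
  assumes "d \<ge> 1" "D \<ge> 1" "t \<ge> 1" "l \<ge> 1"
    and "\<forall>i<D. \<omega> i \<ge> 0" "(\<Sum>i<D. \<omega> i) = 1"
    and "(\<Sum>k<d. (cmod (z k))\<^sup>2) = 1"
    and "in_X d D U V W L" "in_X d D U' V' W' L'"
  shows "cmod ((tr_rho d l (rho_l d D t l \<omega> z U V W L))\<^sup>2
               - (tr_rho d l (rho_l d D t l \<omega> z U' V' W' L'))\<^sup>2)
           \<le> (4 * real (2 * t + l) + 10) * d1 d D (U, V, W, L) (U', V', W', L')
       \<and> cmod (tr_rho_sq d l (rho_l d D t l \<omega> z U V W L)
               - tr_rho_sq d l (rho_l d D t l \<omega> z U' V' W' L'))
           \<le> (4 * real (2 * t + l) + 10) * d1 d D (U, V, W, L) (U', V', W', L')"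
proof -
  let ?n = "2 * t + l"
  let ?A = "\<lambda>i. reshape (observed_state d D ?n z U V W L i)"
    and ?B = "\<lambda>i. reshape (evolved_state d D ?n z U W i)"
    and ?A' = "\<lambda>i. reshape (observed_state d D ?n z U' V' W' L' i)"
    and ?B' = "\<lambda>i. reshape (evolved_state d D ?n z U' W' i)"
  let ?E = "2 * hs_dist D V V' + diag_dist D L L' + 2 * (real ?n * hs_dist (d * D) U U' + hs_dist D W W')"
  note bounds = assms(5,6) hs_norm_reshape_states_le[OF assms(1,7,8)] hs_norm_reshape_states_le[OF assms(1,7,9)]
    hs_norm_reshape_states_diff_le[OF assms(1,2,7,8,9)]
  have "2 * ?E \<le> (4 * real ?n + 10) * d1 d D (U, V, W, L) (U', V', W', L')"
    using hs_dist_nonneg[of "d * D" U U'] hs_dist_nonneg[of D V V'] hs_dist_nonneg[of D W W']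
      diag_dist_nonneg[OF assms(2), of L L']
    unfolding d1_def by (simp add: algebra_simps)
  then show ?thesis
    unfolding tr_rho_def tr_rho_sq_def rho_l_eq_mixture
    using cmod_power2_trace_mixture_diff_le[where A="?A" and B="?B" and A'="?A'" and B'="?B'", OF bounds]
      cmod_trace_square_mixture_diff_le[where A="?A" and B="?B" and A'="?A'" and B'="?B'", OF bounds]
    by linarith
qed

end
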